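(* Let $G_1$ and $G_2$ be OPERA DAGs with $G_1\sim G_2$. Then the layerings $\phi_{LPL}^{G_1}$ and $\phi_{LPL}^{G_2}$ are consistent: $\phi_{LPL}^{G_1}(v)=\phi_{LPL}^{G_2}(v)$ for every vertex $v$ contained in both $G_1$ and $G_2$. Equivalently, the H-OPERA DAGs obtained from $G_1$ and $G_2$ by the longest-path layering are consistent.
   Context: An OPERA DAG is a finite directed acyclic graph $G=(V,E)$ of events, where an edge $(u,v)$ means that $u$ references its parent $v$. $G[v]$ denotes the subgraph induced on $v$ and all vertices reachable from $v$ (its ancestors), and $G_1\sim G_2$ means $G_1[v]=G_2[v]$ for every $v$ in both DAGs. The longest-path layering $\phi_{LPL}^{G}:V\to\mathbb{Z}$ is defined recursively. $\phi_{LPL}^G(v)=1$ if $v$ has no parents in $G$, and otherwise $\phi_{LPL}^G(v)=1+\max\{\phi_{LPL}^G(u): (v,u)\in E\}$. The H-OPERA DAG is the hierarchical graph $(V,E,\phi_{LPL}^G)$. *)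

theory Defs
  imports Main
begin

text \<open>An OPERA DAG is a finite directed acyclic graph (V, E); an edge (u, v) means that
  event u references its parent v.\<close>

definition opera_dag :: "'a set \<Rightarrow> ('a \<times> 'a) set \<Rightarrow> bool" where
  "opera_dag V E \<longleftrightarrow> finite V \<and> E \<subseteq> V \<times> V \<and> acyclic E"

definition reach :: "('a \<times> 'a) set \<Rightarrow> 'a \<Rightarrow> 'a set" where
  "reach E v = {u. (v, u) \<in> E\<^sup>*}"

definition subdag :: "'a set \<Rightarrow> ('a \<times> 'a) set \<Rightarrow> 'a \<Rightarrow> 'a set \<times> ('a \<times> 'a) set" where
  "subdag V E v = (V \<inter> reach E v, E \<inter> ((V \<inter> reach E v) \<times> (V \<inter> reach E v)))"

definition dag_sim :: "'a set \<Rightarrow> ('a \<times> 'a) set \<Rightarrow> 'a set \<Rightarrow> ('a \<times> 'a) set \<Rightarrow> bool" where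
  "dag_sim V1 E1 V2 E2 \<longleftrightarrow> (\<forall>v \<in> V1 \<inter> V2. subdag V1 E1 v = subdag V2 E2 v)"

definition parents :: "('a \<times> 'a) set \<Rightarrow> 'a \<Rightarrow> 'a set" where
  "parents E v = {u. (v, u) \<in> E}"

text \<open>Longest-path layering, defined by well-founded recursion along the parent relation:
  phi v = 1 if v has no parents, otherwise 1 + max of phi over the parents.
  (The recursion is well-founded when (V, E) is an OPERA DAG.)\<close>
definition phi_LPL :: "('a \<times> 'a) set \<Rightarrow> 'a \<Rightarrow> int" where
  "phi_LPL E = wfrec (E\<inverse>)
     (\<lambda>f v. if parents E v = {} then 1 else 1 + Max (f ` parents E v))"

end

theory Submission
  imports Defs
begin

text \<open>The layer of v is computed from the parents of v and their layers alone. If G1[v] = G2[v],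
  then v has the same parents in G1 and G2, and these parents again lie in both DAGs; hence
  well-founded induction along the parent relation shows that both layerings agree.\<close>

lemma wf_converse_if_opera_dag:
  assumes "opera_dag V E"
  shows "wf (E\<inverse>)"
proof -
  from assms have "finite E" and "acyclic E"
    unfolding opera_dag_def by (auto intro: finite_subset)
  then show ?thesis
    by (simp add: wf_iff_acyclic_if_finite acyclic_converse)
qed

lemma phi_LPL_unfold:
  assumes "wf (E\<inverse>)"
  shows "phi_LPL E v =
    (if parents E v = {} then 1 else 1 + Max (phi_LPL E ` parents E v))"
proof -
  have "phi_LPL E v = (if parents E v = {} then 1
      else 1 + Max (cut (phi_LPL E) (E\<inverse>) v ` parents E v))"
    unfolding phi_LPL_def by (rule wfrec[OF assms])
  moreover have "cut (phi_LPL E) (E\<inverse>) v ` parents E v = phi_LPL E ` parents E v"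
    by (auto simp: cut_def parents_def)
  ultimately show ?thesis
    by simp
qed

lemma phi_LPL_cong:
  assumes "wf (E1\<inverse>)" and "wf (E2\<inverse>)"
    and closed: "\<And>u. u \<in> S \<Longrightarrow> parents E1 u \<subseteq> S"
    and same_parents: "\<And>u. u \<in> S \<Longrightarrow> parents E1 u = parents E2 u"
    and "v \<in> S"
  shows "phi_LPL E1 v = phi_LPL E2 v"
  using \<open>v \<in> S\<close>
proof (induction v rule: wf_induct_rule[OF \<open>wf (E1\<inverse>)\<close>])
  case (1 v)
  have "phi_LPL E1 ` parents E1 v = phi_LPL E2 ` parents E2 v"
  proof (rule image_cong)
    fix u
    assume "u \<in> parents E2 v"
    then have "u \<in> parents E1 v"
      using same_parents[OF \<open>v \<in> S\<close>] by simp
    with 1 closed show "phi_LPL E1 u = phi_LPL E2 u"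
      by (auto simp: parents_def)
  qed (simp add: same_parents \<open>v \<in> S\<close>)
  then show ?case
    using same_parents[OF \<open>v \<in> S\<close>] by (simp add: phi_LPL_unfold assms(1,2))
qed

lemma parents_subset:
  assumes "E \<subseteq> V \<times> V"
  shows "parents E v \<subseteq> V"
  using assms by (auto simp: parents_def)

lemma parents_eq_if_subdag_eq:
  assumes "E1 \<subseteq> V1 \<times> V1" and "E2 \<subseteq> V2 \<times> V2"
    and "v \<in> V1 \<inter> V2" and "subdag V1 E1 v = subdag V2 E2 v"
  shows "parents E1 v = parents E2 v"
proof -
  define R where "R = V1 \<inter> reach E1 v"
  have R_eq: "R = V2 \<inter> reach E2 v" and E_eq: "E1 \<inter> (R \<times> R) = E2 \<inter> (R \<times> R)"
    using assms(4) by (auto simp: subdag_def R_def)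
  have "v \<in> R"
    using assms(3) by (simp add: R_def reach_def)
  moreover have "parents E1 v \<subseteq> R"
    using assms(1) by (auto simp: R_def parents_def reach_def)
  moreover have "parents E2 v \<subseteq> R"
    using assms(2) by (auto simp: R_eq parents_def reach_def)
  ultimately show ?thesis
    using E_eq unfolding parents_def by blast
qed

theorem mainTheorem5:
  assumes "opera_dag V1 E1" and "opera_dag V2 E2" and "dag_sim V1 E1 V2 E2"
  shows "\<forall>v \<in> V1 \<inter> V2. phi_LPL E1 v = phi_LPL E2 v"
proof
  have E1: "E1 \<subseteq> V1 \<times> V1" and E2: "E2 \<subseteq> V2 \<times> V2"
    using assms(1,2) by (simp_all add: opera_dag_def)
  have same_parents: "parents E1 u = parents E2 u" if "u \<in> V1 \<inter> V2" for u
    using parents_eq_if_subdag_eq[OF E1 E2 that] assms(3) that by (simp add: dag_sim_def)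
  have closed: "parents E1 u \<subseteq> V1 \<inter> V2" if "u \<in> V1 \<inter> V2" for u
    using parents_subset[OF E1] parents_subset[OF E2] same_parents[OF that] by blast
  fix v
  assume "v \<in> V1 \<inter> V2"
  then show "phi_LPL E1 v = phi_LPL E2 v"
    using phi_LPL_cong[OF wf_converse_if_opera_dag[OF assms(1)]
        wf_converse_if_opera_dag[OF assms(2)] closed same_parents] by blast
qed

end
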